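(* Let $p,q\ge1$ and let $X\in\mathbb{R}^p$, $Y\in\mathbb{R}^q$ be random vectors. Then $X$ and $Y$ are independent if and only if $\mathcal{V}^2(u^tX,v^tY)=0$ for every $u\in\mathcal{S}^{p-1}=\{u\in\mathbb{R}^p:|u|=1\}$ and every $v\in\mathcal{S}^{q-1}$.
   Context: $|\cdot|$ is the Euclidean norm. For random vectors $X\in\mathbb{R}^p$, $Y\in\mathbb{R}^q$ with characteristic functions $\phi_X,\phi_Y$ and joint characteristic function $\phi_{X,Y}$, the distance covariance is $$\mathcal{V}^2(X,Y)=\int_{\mathbb{R}^{p+q}}\frac{|\phi_{X,Y}(t,s)-\phi_X(t)\phi_Y(s)|^2}{c_pc_q|t|^{p+1}|s|^{q+1}}\,dt\,ds,\qquad c_p=\frac{\pi^{(p+1)/2}}{\Gamma((p+1)/2)}.$$ (Applied with $p=q=1$ to the univariate projections $u^tX$, $v^tY$.) *)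

theory Defs
  imports "HOL-Probability.Probability"
begin

text \<open>Independence of two random variables with possibly different value types
  (the library's indep_var needs equal types): independence of the generated
  sigma-algebras, as in the library lemma indep_var_eq.\<close>
definition indep_rv :: "'a measure \<Rightarrow> ('a \<Rightarrow> 'b::topological_space) \<Rightarrow> ('a \<Rightarrow> 'c::topological_space) \<Rightarrow> bool" where
  "indep_rv M X Y \<longleftrightarrow>
     X \<in> borel_measurable M \<and> Y \<in> borel_measurable M \<and>
     prob_space.indep_set M
       (sigma_sets (space M) {X -` A \<inter> space M | A. A \<in> sets borel})
       (sigma_sets (space M) {Y -` B \<inter> space M | B. B \<in> sets borel})"

definition dc_const :: "nat \<Rightarrow> real" where
  "dc_const p = pi powr ((real p + 1) / 2) / Gamma ((real p + 1) / 2)"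

definition charf :: "'a measure \<Rightarrow> ('a \<Rightarrow> real) \<Rightarrow> real \<Rightarrow> complex" where
  "charf M U t = (CLINT \<omega>|M. iexp (t * U \<omega>))"

definition charf2 :: "'a measure \<Rightarrow> ('a \<Rightarrow> real) \<Rightarrow> ('a \<Rightarrow> real) \<Rightarrow> real \<Rightarrow> real \<Rightarrow> complex" where
  "charf2 M U V t s = (CLINT \<omega>|M. iexp (t * U \<omega> + s * V \<omega>))"

text \<open>Squared distance covariance of univariate U, V (p = q = 1), as a
  (possibly infinite) nonnegative Lebesgue integral over R^2.\<close>
definition dcov2 :: "'a measure \<Rightarrow> ('a \<Rightarrow> real) \<Rightarrow> ('a \<Rightarrow> real) \<Rightarrow> ennreal" where
  "dcov2 M U V = (\<integral>\<^sup>+ ts. ennreal ((cmod (charf2 M U V (fst ts) (snd ts)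
        - charf M U (fst ts) * charf M V (snd ts)))\<^sup>2
      / (dc_const 1 * dc_const 1 * \<bar>fst ts\<bar> powr 2 * \<bar>snd ts\<bar> powr 2))
      \<partial>(lborel \<Otimes>\<^sub>M lborel))"

end

theory Submission
  imports Defs
begin

text \<open>
  X and Y are independent iff the joint law of (X, Y) is the product of the marginal laws,
  and by uniqueness of characteristic functions on Euclidean space this holds iff the joint
  characteristic function factorises: E e^{i(a\<bullet>X + b\<bullet>Y)} = E e^{i a\<bullet>X} E e^{i b\<bullet>Y}.
  Writing a = t u and b = s v with unit vectors u, v, this is the factorisation of the joint
  characteristic function of (u\<bullet>X, v\<bullet>Y) at (t, s). Characteristic functions are
  continuous, so the integrand defining the distance covariance of u\<bullet>X and v\<bullet>Y is
  continuous off the axes, and the integral vanishes iff that factorisation holds everywhere.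

  The multivariate uniqueness theorem is reduced to Levy's one-dimensional one by induction
  over the coordinates: the characteristic functions of the laws weighted by the indicator of
  the box in the coordinates of S agree at all frequencies orthogonal to S. To add a
  coordinate k, one applies the one-dimensional theorem to the projection on k of the laws
  weighted by F (1 + Re (c e^{i w\<bullet>x})), which are nonnegative for cmod c \<le> 1 and whose
  characteristic functions along k are known by the induction hypothesis.
\<close>

section \<open>Uniqueness of characteristic functions on Euclidean space\<close>

lemma Levy_uniqueness_weighted:
  fixes \<mu> \<nu> :: "'e measure" and g1 g2 \<phi> :: "'e \<Rightarrow> real"
  assumes "prob_space \<mu>" "prob_space \<nu>"
    and [measurable]: "g1 \<in> borel_measurable \<mu>" "g2 \<in> borel_measurable \<nu>"
      "\<phi> \<in> borel_measurable \<mu>" "\<phi> \<in> borel_measurable \<nu>"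
    and g1_bounds: "\<And>x. 0 \<le> g1 x \<and> g1 x \<le> B" and g2_bounds: "\<And>x. 0 \<le> g2 x \<and> g2 x \<le> B"
    and char_eq: "\<And>t. (CLINT x|\<mu>. of_real (g1 x) * iexp (t * \<phi> x)) =
                      (CLINT x|\<nu>. of_real (g2 x) * iexp (t * \<phi> x))"
    and [measurable]: "A \<in> sets borel"
  shows "(\<integral>x. g1 x * indicator A (\<phi> x) \<partial>\<mu>) = (\<integral>x. g2 x * indicator A (\<phi> x) \<partial>\<nu>)"
proof -
  interpret \<mu>: prob_space \<mu> by fact
  interpret \<nu>: prob_space \<nu> by fact
  have int1: "integrable \<mu> g1" and int2: "integrable \<nu> g2"
    using g1_bounds g2_bounds
    by (auto intro!: \<mu>.integrable_const_bound[where B=B] \<nu>.integrable_const_bound[where B=B])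
  define m where "m = integral\<^sup>L \<mu> g1"
  have m2: "integral\<^sup>L \<nu> g2 = m"
    using char_eq[of 0] by (simp add: m_def)
  have "m \<ge> 0" unfolding m_def using g1_bounds by (simp add: integral_nonneg)
  then consider "m = 0" | "m > 0" by linarith
  then show ?thesis
  proof cases
    case 1
    then have "AE x in \<mu>. g1 x = 0" "AE x in \<nu>. g2 x = 0"
      using integral_nonneg_eq_0_iff_AE[OF int1] integral_nonneg_eq_0_iff_AE[OF int2]
        g1_bounds g2_bounds m2 m_def by auto
    then show ?thesis
      by (simp add: integral_eq_zero_AE eventually_mono)
  next
    case 2
    \<comment> \<open>Normalised by their common mass m, the weights give two real distributions
      with equal characteristic functions.\<close>
    define N where "N \<rho> g = distr (density \<rho> (\<lambda>x. ennreal (g x / m))) borel \<phi>" for \<rho> g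
    have real_distribution_N: "real_distribution (N \<rho> g)"
      if "prob_space \<rho>" and [measurable]: "g \<in> borel_measurable \<rho>" "\<phi> \<in> borel_measurable \<rho>"
        and "integrable \<rho> g" "\<And>x. 0 \<le> g x" "integral\<^sup>L \<rho> g = m" for \<rho> g
    proof -
      interpret \<rho>: prob_space \<rho> by fact
      have "(\<integral>\<^sup>+x. ennreal (g x / m) \<partial>\<rho>) = ennreal (\<integral>x. g x / m \<partial>\<rho>)"
        using that 2 by (intro nn_integral_eq_integral) auto
      also have "\<dots> = 1" using that 2 by simp
      finally have "prob_space (density \<rho> (\<lambda>x. ennreal (g x / m)))"
        by (intro prob_spaceI) (simp add: emeasure_density nn_integral_set_ennreal[symmetric])
      then show ?thesis
        unfolding N_def real_distribution_def real_distribution_axioms_def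
        using that by (auto intro!: prob_space.prob_space_distr)
    qed
    have integral_N: "integral\<^sup>L (N \<rho> g) f = (\<integral>x. (g x / m) *\<^sub>R f (\<phi> x) \<partial>\<rho>)"
      if [measurable]: "g \<in> borel_measurable \<rho>" "\<phi> \<in> borel_measurable \<rho>" "f \<in> borel_measurable borel"
        "\<And>x. 0 \<le> g x"
      for \<rho> g and f :: "real \<Rightarrow> 'b::{banach, second_countable_topology}"
      unfolding N_def using that 2 by (simp add: integral_distr integral_density)
    have "char (N \<mu> g1) = char (N \<nu> g2)"
    proof
      fix t
      show "char (N \<mu> g1) t = char (N \<nu> g2) t"
        unfolding char_def using char_eq[of t] g1_bounds g2_bounds
        by (simp add: integral_N scaleR_conv_of_real)
    qed
    moreover have "real_distribution (N \<mu> g1)" "real_distribution (N \<nu> g2)"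
      using int1 int2 g1_bounds g2_bounds m2 assms(1,2) by (auto intro!: real_distribution_N simp: m_def)
    ultimately have "N \<mu> g1 = N \<nu> g2"
      using Levy_uniqueness by blast
    moreover have "integral\<^sup>L (N \<rho> g) (indicator A) = (\<integral>x. g x * indicator A (\<phi> x) \<partial>\<rho>) / m"
      if [measurable]: "g \<in> borel_measurable \<rho>" "\<phi> \<in> borel_measurable \<rho>" and "\<And>x. 0 \<le> g x"
      for \<rho> g
      using that by (subst integral_N) (simp_all add: mult.commute)
    ultimately show ?thesis
      using 2 g1_bounds g2_bounds by (metis (no_types, lifting) assms(3-6) nonzero_divide_eq_eq less_irrefl)
  qed
qed

definition weighted_char :: "'e::euclidean_space measure \<Rightarrow> ('e \<Rightarrow> real) \<Rightarrow> 'e \<Rightarrow> complex" where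
  "weighted_char \<mu> F w = (CLINT x|\<mu>. of_real (F x) * iexp (w \<bullet> x))"

lemma integrable_weighted_iexp:
  fixes \<mu> :: "'e::euclidean_space measure"
  assumes "prob_space \<mu>" "sets \<mu> = sets borel"
    and "F \<in> borel_measurable borel" "\<And>x. \<bar>F x\<bar> \<le> 1"
  shows "integrable \<mu> (\<lambda>x. of_real (F x) * iexp (w \<bullet> x))"
proof -
  interpret prob_space \<mu> by fact
  have "(\<lambda>x. of_real (F x) * iexp (w \<bullet> x)) \<in> borel_measurable \<mu>"
    using assms(3) by (simp add: measurable_cong_sets[OF assms(2) refl])
  then show ?thesis
    using assms(4) by (intro integrable_const_bound[where B=1]) (auto simp: norm_mult)
qed

lemma of_real_Re_mult_iexp:
  "complex_of_real (Re (c * iexp \<theta>)) = (c * iexp \<theta> + cnj c * iexp (- \<theta>)) / 2"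
  using complex_add_cnj[of "c * iexp \<theta>"] by (simp add: exp_cnj)

lemma iexp_add: "iexp (a + b) = iexp a * iexp b"
  by (simp add: distrib_left exp_add)

lemma weighted_char_mult_trig:
  fixes \<mu> :: "'e::euclidean_space measure"
  assumes "prob_space \<mu>" "sets \<mu> = sets borel"
    and "F \<in> borel_measurable borel" "\<And>x. \<bar>F x\<bar> \<le> 1"
  shows "(CLINT x|\<mu>. of_real (F x * (1 + Re (c * iexp (w \<bullet> x)))) * iexp (v \<bullet> x)) =
    weighted_char \<mu> F v + (c * weighted_char \<mu> F (w + v) + cnj c * weighted_char \<mu> F (v - w)) / 2"
proof -
  have ring: "(f::complex) * (1 + (c * a + d * b) / 2) * e = f * e + (c * (f * (a * e)) + d * (f * (b * e))) / 2"
    for f a b d e by (simp add: field_simps)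
  have "of_real (F x * (1 + Re (c * iexp (w \<bullet> x)))) * iexp (v \<bullet> x) =
      of_real (F x) * iexp (v \<bullet> x) + (c * (of_real (F x) * iexp ((w + v) \<bullet> x)) +
        cnj c * (of_real (F x) * iexp ((v - w) \<bullet> x))) / 2" for x
    unfolding inner_add_left inner_diff_left diff_conv_add_uminus[of "v \<bullet> x"] iexp_add
    by (simp only: of_real_mult of_real_add of_real_1 of_real_Re_mult_iexp ring mult.commute[of "iexp (v \<bullet> x)"])
  then show ?thesis
    unfolding weighted_char_def by (simp add: integrable_weighted_iexp[OF assms])
qed

lemma Re_weighted_char:
  fixes \<mu> :: "'e::euclidean_space measure"
  assumes "prob_space \<mu>" "sets \<mu> = sets borel"
    and "F \<in> borel_measurable borel" "\<And>x. \<bar>F x\<bar> \<le> 1"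
  shows "Re (c * weighted_char \<mu> F w) = (\<integral>x. F x * Re (c * iexp (w \<bullet> x)) \<partial>\<mu>)"
proof -
  have "Re (c * weighted_char \<mu> F w) = Re (CLINT x|\<mu>. c * (of_real (F x) * iexp (w \<bullet> x)))"
    unfolding weighted_char_def by simp
  also have "\<dots> = (\<integral>x. Re (c * (of_real (F x) * iexp (w \<bullet> x))) \<partial>\<mu>)"
    using integrable_weighted_iexp[OF assms, of w]
    by (intro integral_bounded_linear[OF bounded_linear_Re, symmetric]) simp
  also have "\<dots> = (\<integral>x. F x * Re (c * iexp (w \<bullet> x)) \<partial>\<mu>)"
    by (simp add: algebra_simps)
  finally show ?thesis .
qed

lemma weighted_char_indicator_eq:
  fixes \<mu> \<nu> :: "'e::euclidean_space measure"
  assumes \<mu>: "prob_space \<mu>" "sets \<mu> = sets borel" and \<nu>: "prob_space \<nu>" "sets \<nu> = sets borel"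
    and F [measurable]: "F \<in> borel_measurable borel" and F_bounds: "\<And>x. 0 \<le> F x \<and> F x \<le> 1"
    and [measurable]: "A \<in> sets borel"
    and eq: "\<And>t v. v \<in> {0, w, - w} \<Longrightarrow>
      weighted_char \<mu> F (v + t *\<^sub>R k) = weighted_char \<nu> F (v + t *\<^sub>R k)"
  shows "weighted_char \<mu> (\<lambda>x. indicator A (k \<bullet> x) * F x) w =
    weighted_char \<nu> (\<lambda>x. indicator A (k \<bullet> x) * F x) w"
proof -
  have F_abs: "\<bar>F x\<bar> \<le> 1" for x using F_bounds[of x] by simp
  have meas_\<mu>: "borel_measurable \<mu> = borel_measurable borel"
    and meas_\<nu>: "borel_measurable \<nu> = borel_measurable borel"
    using \<mu>(2) \<nu>(2) by (auto intro: measurable_cong_sets)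
  define g where "g c x = F x * (1 + Re (c * iexp (w \<bullet> x)))" for c x
  have g_bounds: "0 \<le> g c x \<and> g c x \<le> 2" if "cmod c \<le> 1" for c x
  proof -
    have "\<bar>Re (c * iexp (w \<bullet> x))\<bar> \<le> 1"
      using abs_Re_le_cmod[of "c * iexp (w \<bullet> x)"] that by (simp add: norm_mult)
    then show ?thesis
      unfolding g_def using F_bounds[of x] mult_mono[of "F x" 1 "1 + Re (c * iexp (w \<bullet> x))" 2]
      by auto
  qed
  have weighted_eq: "(\<integral>x. g c x * indicator A (k \<bullet> x) \<partial>\<mu>) = (\<integral>x. g c x * indicator A (k \<bullet> x) \<partial>\<nu>)"
    if "cmod c \<le> 1" for c
  proof (rule Levy_uniqueness_weighted[OF \<mu>(1) \<nu>(1), where B=2])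
    show "(CLINT x|\<mu>. of_real (g c x) * iexp (t * (k \<bullet> x))) =
        (CLINT x|\<nu>. of_real (g c x) * iexp (t * (k \<bullet> x)))" for t
      using weighted_char_mult_trig[OF \<mu> F F_abs, of c w "t *\<^sub>R k"]
        weighted_char_mult_trig[OF \<nu> F F_abs, of c w "t *\<^sub>R k"]
        eq[of 0 t] eq[of w t] eq[of "- w" t]
      by (simp add: g_def)
  qed (use g_bounds that in \<open>auto simp: g_def meas_\<mu> meas_\<nu>\<close>)
  define G where "G x = indicator A (k \<bullet> x) * F x" for x
  have G_abs: "\<bar>G x\<bar> \<le> 1" for x
    using F_abs[of x] by (simp add: G_def indicator_def)
  have Re_eq: "Re (c * weighted_char \<mu> G w) = Re (c * weighted_char \<nu> G w)"
    if c: "cmod c \<le> 1" for c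
  proof -
    have "Re (c * weighted_char \<rho> G w) =
        (\<integral>x. g c x * indicator A (k \<bullet> x) \<partial>\<rho>) - (\<integral>x. g 0 x * indicator A (k \<bullet> x) \<partial>\<rho>)"
      if "prob_space \<rho>" and sets: "sets \<rho> = sets borel" for \<rho>
    proof -
      interpret prob_space \<rho> by fact
      have int: "integrable \<rho> (\<lambda>x. g c' x * indicator A (k \<bullet> x))" if "cmod c' \<le> 1" for c'
      proof (rule integrable_const_bound[where B=2])
        show "AE x in \<rho>. norm (g c' x * indicator A (k \<bullet> x)) \<le> 2"
          using g_bounds[OF that] by (simp add: indicator_def)
        show "(\<lambda>x. g c' x * indicator A (k \<bullet> x)) \<in> borel_measurable \<rho>"
          by (simp add: measurable_cong_sets[OF sets refl] g_def)
      qed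
      have "(\<integral>x. g c x * indicator A (k \<bullet> x) \<partial>\<rho>) - (\<integral>x. g 0 x * indicator A (k \<bullet> x) \<partial>\<rho>) =
          (\<integral>x. g c x * indicator A (k \<bullet> x) - g 0 x * indicator A (k \<bullet> x) \<partial>\<rho>)"
        using int[OF c] int[of 0] by simp
      also have "\<dots> = (\<integral>x. G x * Re (c * iexp (w \<bullet> x)) \<partial>\<rho>)"
        by (simp add: g_def G_def algebra_simps)
      also have "\<dots> = Re (c * weighted_char \<rho> G w)"
        using that G_abs by (intro Re_weighted_char[symmetric]) (auto simp: G_def)
      finally show ?thesis ..
    qed
    then show ?thesis using \<mu> \<nu> weighted_eq[OF that] weighted_eq[of 0] by simp
  qed
  \<comment> \<open>Re (- \<i> * z) = Im z\<close>
  show ?thesis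
    using Re_eq[of 1] Re_eq[of "- \<i>"] unfolding G_def[symmetric] by (simp add: complex_eq_iff)
qed

definition box_indicator :: "'e::euclidean_space set \<Rightarrow> 'e \<Rightarrow> 'e \<Rightarrow> 'e \<Rightarrow> real" where
  "box_indicator S a c x = (\<Prod>b\<in>S. indicator {a \<bullet> b<..<c \<bullet> b} (b \<bullet> x))"

lemma box_indicator_measurable [measurable]: "box_indicator S a c \<in> borel_measurable borel"
  unfolding box_indicator_def by measurable

lemma box_indicator_bounds: "0 \<le> box_indicator S a c x \<and> box_indicator S a c x \<le> 1"
  unfolding box_indicator_def by (auto intro!: prod_nonneg prod_le_1)

lemma box_indicator_Basis: "box_indicator Basis a c = indicator (box a c)"
  by (auto simp: box_indicator_def fun_eq_iff indicator_def mem_box inner_commute)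

lemma weighted_char_box_indicator_eq:
  fixes \<mu> \<nu> :: "'e::euclidean_space measure"
  assumes \<mu>: "prob_space \<mu>" "sets \<mu> = sets borel" and \<nu>: "prob_space \<nu>" "sets \<nu> = sets borel"
    and char_eq: "\<And>w. (CLINT x|\<mu>. iexp (w \<bullet> x)) = (CLINT x|\<nu>. iexp (w \<bullet> x))"
    and "finite S" "S \<subseteq> Basis" "\<forall>b\<in>S. w \<bullet> b = 0"
  shows "weighted_char \<mu> (box_indicator S a c) w = weighted_char \<nu> (box_indicator S a c) w"
  using assms(6-)
proof (induction S arbitrary: w rule: finite_induct)
  case empty
  then show ?case
    using char_eq by (simp add: weighted_char_def box_indicator_def)
next
  case (insert k S)
  have "box_indicator (insert k S) a c = (\<lambda>x. indicator {a \<bullet> k<..<c \<bullet> k} (k \<bullet> x) * box_indicator S a c x)"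
    using insert.hyps by (simp add: box_indicator_def fun_eq_iff)
  moreover have "weighted_char \<mu> (box_indicator S a c) (v + t *\<^sub>R k) =
      weighted_char \<nu> (box_indicator S a c) (v + t *\<^sub>R k)" if "v \<in> {0, w, - w}" for v t
  proof (rule insert.IH)
    show "\<forall>b\<in>S. (v + t *\<^sub>R k) \<bullet> b = 0"
      using that insert.prems insert.hyps by (auto simp: inner_add_left inner_Basis)
  qed (use insert.prems in auto)
  ultimately show ?case
    using weighted_char_indicator_eq[OF \<mu> \<nu> box_indicator_measurable box_indicator_bounds,
        where A="{a \<bullet> k<..<c \<bullet> k}" and w=w and k=k]
    by simp
qed

theorem Levy_uniqueness_euclidean:
  fixes \<mu> \<nu> :: "'e::euclidean_space measure"
  assumes \<mu>: "prob_space \<mu>" "sets \<mu> = sets borel" and \<nu>: "prob_space \<nu>" "sets \<nu> = sets borel"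
    and char_eq: "\<And>w. (CLINT x|\<mu>. iexp (w \<bullet> x)) = (CLINT x|\<nu>. iexp (w \<bullet> x))"
  shows "\<mu> = \<nu>"
proof -
  interpret \<mu>: prob_space \<mu> by fact
  interpret \<nu>: prob_space \<nu> by fact
  have "measure \<mu> (box a c) = measure \<nu> (box a c)" for a c :: 'e
  proof -
    have "measure \<rho> (box a c) = Re (weighted_char \<rho> (box_indicator Basis a c) 0)"
      if "sets \<rho> = sets borel" for \<rho> :: "'e measure"
      using that by (simp add: weighted_char_def box_indicator_Basis sets_eq_imp_space_eq)
    then show ?thesis
      using weighted_char_box_indicator_eq[OF \<mu> \<nu> char_eq, of Basis 0 a c] \<mu>(2) \<nu>(2) by simp
  qed
  then show ?thesis
  proof (intro measure_eqI_generator_eq[where E="range (\<lambda>(a, b). box a b)" and \<Omega>=UNIV])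
    show "Int_stable (range (\<lambda>(a, b). box a b :: 'e set))"
      by (auto simp: Int_stable_def box_Int_box)
    let ?A = "\<lambda>n::nat. box (- (real n *\<^sub>R One)) (real n *\<^sub>R One) :: 'e set"
    show "range ?A \<subseteq> range (\<lambda>(a, b). box a b)" "(\<Union>i. ?A i) = UNIV"
      unfolding UN_box_eq_UNIV by auto
  qed (auto simp: \<mu>(2) \<nu>(2) borel_eq_box \<mu>.emeasure_eq_measure \<nu>.emeasure_eq_measure)
qed

section \<open>Independence and characteristic functions\<close>

lemma Int_stable_vimage_sets: "Int_stable ((\<lambda>A. X -` A \<inter> \<Omega>) ` sets N)"
proof (rule Int_stableI_image)
  fix A B assume "A \<in> sets N" "B \<in> sets N"
  then show "\<exists>C\<in>sets N. (X -` A \<inter> \<Omega>) \<inter> (X -` B \<inter> \<Omega>) = X -` C \<inter> \<Omega>"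
    by (intro bexI[of _ "A \<inter> B"]) auto
qed

lemma indep_rv_iff_prob_Int:
  fixes X :: "'a \<Rightarrow> 'b::topological_space" and Y :: "'a \<Rightarrow> 'c::topological_space"
  assumes "prob_space M" and X: "X \<in> borel_measurable M" and Y: "Y \<in> borel_measurable M"
  shows "indep_rv M X Y \<longleftrightarrow> (\<forall>A\<in>sets borel. \<forall>B\<in>sets borel.
    measure M (X -` A \<inter> Y -` B \<inter> space M) = measure M (X -` A \<inter> space M) * measure M (Y -` B \<inter> space M))"
proof -
  interpret prob_space M by fact
  define GX where "GX = (\<lambda>A. X -` A \<inter> space M) ` sets (borel :: 'b measure)"
  define GY where "GY = (\<lambda>B. Y -` B \<inter> space M) ` sets (borel :: 'c measure)"
  have Int_vimage: "(X -` A \<inter> space M) \<inter> (Y -` B \<inter> space M) = X -` A \<inter> Y -` B \<inter> space M" for A B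
    by blast
  have "GX \<subseteq> events" "GY \<subseteq> events"
    using X Y by (auto simp: GX_def GY_def)
  then have "indep_set GX GY \<longleftrightarrow> (\<forall>A\<in>sets borel. \<forall>B\<in>sets borel.
      prob (X -` A \<inter> Y -` B \<inter> space M) = prob (X -` A \<inter> space M) * prob (Y -` B \<inter> space M))"
    unfolding indep_sets2_eq GX_def GY_def by (simp add: Int_vimage)
  moreover have "indep_rv M X Y \<longleftrightarrow> indep_set (sigma_sets (space M) GX) (sigma_sets (space M) GY)"
    using X Y by (simp add: indep_rv_def GX_def GY_def setcompr_eq_image)
  moreover have "indep_set (sigma_sets (space M) GX) (sigma_sets (space M) GY) \<longleftrightarrow> indep_set GX GY"
  proof
    assume "indep_set (sigma_sets (space M) GX) (sigma_sets (space M) GY)"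
    then show "indep_set GX GY"
      unfolding indep_set_def by (rule indep_sets_mono_sets) (auto split: bool.split)
  next
    assume "indep_set GX GY"
    then show "indep_set (sigma_sets (space M) GX) (sigma_sets (space M) GY)"
      unfolding GX_def GY_def by (intro indep_set_sigma_sets Int_stable_vimage_sets)
  qed
  ultimately show ?thesis by simp
qed

lemma distr_pair_eq_iff_prob_Int:
  fixes X :: "'a \<Rightarrow> 'b::second_countable_topology" and Y :: "'a \<Rightarrow> 'c::second_countable_topology"
  assumes "prob_space M" and [measurable]: "X \<in> borel_measurable M" "Y \<in> borel_measurable M"
  shows "distr M borel (\<lambda>\<omega>. (X \<omega>, Y \<omega>)) = distr M borel X \<Otimes>\<^sub>M distr M borel Y \<longleftrightarrow>
    (\<forall>A\<in>sets borel. \<forall>B\<in>sets borel.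
      measure M (X -` A \<inter> Y -` B \<inter> space M) = measure M (X -` A \<inter> space M) * measure M (Y -` B \<inter> space M))"
    (is "?J = ?S \<Otimes>\<^sub>M ?T \<longleftrightarrow> ?rect")
proof -
  interpret prob_space M by fact
  interpret S: prob_space ?S by (rule prob_space_distr) simp
  interpret T: prob_space ?T by (rule prob_space_distr) simp
  interpret ST: pair_prob_space ?S ?T ..
  have J_Times: "emeasure ?J (A \<times> B) = prob (X -` A \<inter> Y -` B \<inter> space M)"
    if "A \<in> sets borel" "B \<in> sets borel" for A B
  proof -
    have "A \<times> B \<in> sets borel"
      using that by (simp add: borel_prod[symmetric])
    moreover have "(\<lambda>\<omega>. (X \<omega>, Y \<omega>)) -` (A \<times> B) \<inter> space M = X -` A \<inter> Y -` B \<inter> space M"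
      by auto
    ultimately show ?thesis
      by (simp add: emeasure_distr emeasure_eq_measure)
  qed
  have ST_Times: "emeasure (?S \<Otimes>\<^sub>M ?T) (A \<times> B) = prob (X -` A \<inter> space M) * prob (Y -` B \<inter> space M)"
    if "A \<in> sets borel" "B \<in> sets borel" for A B
    using that by (simp add: T.emeasure_pair_measure_Times emeasure_distr emeasure_eq_measure ennreal_mult)
  show ?thesis
  proof
    assume "?J = ?S \<Otimes>\<^sub>M ?T"
    then show ?rect
      using J_Times ST_Times by (simp add: ennreal_mult[symmetric])
  next
    assume ?rect
    have "?S \<Otimes>\<^sub>M ?T = ?J"
    proof (rule pair_measure_eqI)
      show "sets (?S \<Otimes>\<^sub>M ?T) = sets ?J"
        by (simp add: borel_prod[symmetric] cong: sets_pair_measure_cong)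
      show "emeasure ?S A * emeasure ?T B = emeasure ?J (A \<times> B)"
        if "A \<in> sets ?S" "B \<in> sets ?T" for A B
        using that \<open>?rect\<close> J_Times ST_Times by (simp add: T.emeasure_pair_measure_Times)
    qed (fact S.sigma_finite_measure_axioms T.sigma_finite_measure_axioms)+
    then show "?J = ?S \<Otimes>\<^sub>M ?T" ..
  qed
qed

lemma char_distr_pair:
  fixes X :: "'a \<Rightarrow> 'b::euclidean_space" and Y :: "'a \<Rightarrow> 'c::euclidean_space"
  assumes [measurable]: "X \<in> borel_measurable M" "Y \<in> borel_measurable M"
  shows "(CLINT z|distr M borel (\<lambda>\<omega>. (X \<omega>, Y \<omega>)). iexp ((a, b) \<bullet> z)) =
    (CLINT \<omega>|M. iexp (a \<bullet> X \<omega> + b \<bullet> Y \<omega>))"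
  by (simp add: integral_distr)

lemma char_pair_measure_distr:
  fixes X :: "'a \<Rightarrow> 'b::euclidean_space" and Y :: "'a \<Rightarrow> 'c::euclidean_space"
  assumes "prob_space M" and [measurable]: "X \<in> borel_measurable M" "Y \<in> borel_measurable M"
  shows "(CLINT z|distr M borel X \<Otimes>\<^sub>M distr M borel Y. iexp ((a, b) \<bullet> z)) =
    (CLINT \<omega>|M. iexp (a \<bullet> X \<omega>)) * (CLINT \<omega>|M. iexp (b \<bullet> Y \<omega>))"
    (is "integral\<^sup>L (?S \<Otimes>\<^sub>M ?T) _ = _")
proof -
  interpret prob_space M by fact
  interpret S: prob_space ?S by (rule prob_space_distr) simp
  interpret T: prob_space ?T by (rule prob_space_distr) simp
  interpret ST: pair_prob_space ?S ?T ..
  have "(\<lambda>z. iexp ((a, b) \<bullet> z)) \<in> borel_measurable (borel \<Otimes>\<^sub>M borel)"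
    unfolding borel_prod by measurable
  then have "integrable (?S \<Otimes>\<^sub>M ?T) (\<lambda>z. iexp ((a, b) \<bullet> z))"
    by (intro ST.integrable_const_bound[where B=1])
      (simp_all add: measurable_cong_sets[OF sets_pair_measure_cong[OF sets_distr sets_distr] refl])
  then have "(CLINT z|?S \<Otimes>\<^sub>M ?T. iexp ((a, b) \<bullet> z)) = (CLINT x|?S. CLINT y|?T. iexp ((a, b) \<bullet> (x, y)))"
    by (rule ST.integral_fst'[symmetric])
  also have "\<dots> = (CLINT x|?S. iexp (a \<bullet> x) * (CLINT y|?T. iexp (b \<bullet> y)))"
    by (simp only: inner_Pair iexp_add integral_mult_right_zero)
  also have "\<dots> = (CLINT x|?S. iexp (a \<bullet> x)) * (CLINT y|?T. iexp (b \<bullet> y))"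
    by simp
  finally show ?thesis
    by (simp add: integral_distr)
qed

theorem indep_rv_iff_char_factorizes:
  fixes X :: "'a \<Rightarrow> 'b::euclidean_space" and Y :: "'a \<Rightarrow> 'c::euclidean_space"
  assumes "prob_space M" and [measurable]: "X \<in> borel_measurable M" "Y \<in> borel_measurable M"
  shows "indep_rv M X Y \<longleftrightarrow> (\<forall>a b. (CLINT \<omega>|M. iexp (a \<bullet> X \<omega> + b \<bullet> Y \<omega>)) =
    (CLINT \<omega>|M. iexp (a \<bullet> X \<omega>)) * (CLINT \<omega>|M. iexp (b \<bullet> Y \<omega>)))"
    (is "_ \<longleftrightarrow> ?factorizes")
proof -
  interpret prob_space M by fact
  let ?J = "distr M borel (\<lambda>\<omega>. (X \<omega>, Y \<omega>))" and ?P = "distr M borel X \<Otimes>\<^sub>M distr M borel Y"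
  have "indep_rv M X Y \<longleftrightarrow> ?J = ?P"
    by (simp add: indep_rv_iff_prob_Int[OF prob_space_axioms] distr_pair_eq_iff_prob_Int[OF prob_space_axioms])
  also have "\<dots> \<longleftrightarrow> (\<forall>w. (CLINT z|?J. iexp (w \<bullet> z)) = (CLINT z|?P. iexp (w \<bullet> z)))"
  proof
    assume char_eq: "\<forall>w. (CLINT z|?J. iexp (w \<bullet> z)) = (CLINT z|?P. iexp (w \<bullet> z))"
    show "?J = ?P"
    proof (rule Levy_uniqueness_euclidean)
      show "(CLINT z|?J. iexp (w \<bullet> z)) = (CLINT z|?P. iexp (w \<bullet> z))" for w
        using char_eq by blast
    qed (simp_all add: prob_space_distr prob_space_pair borel_prod[symmetric] cong: sets_pair_measure_cong)
  qed simp
  also have "\<dots> \<longleftrightarrow> ?factorizes"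
    by (simp only: split_paired_All char_distr_pair char_pair_measure_distr[OF prob_space_axioms] assms)
  finally show ?thesis .
qed

section \<open>Vanishing of the distance covariance\<close>

lemma isCont_integral_iexp:
  fixes g :: "'p::metric_space \<Rightarrow> 'a \<Rightarrow> real"
  assumes "prob_space M" and [measurable]: "\<And>p. g p \<in> borel_measurable M"
    and cont: "\<And>\<omega>. isCont (\<lambda>p. g p \<omega>) p0"
  shows "isCont (\<lambda>p. CLINT \<omega>|M. iexp (g p \<omega>)) p0"
proof (rule continuous_at_sequentiallyI)
  interpret prob_space M by fact
  fix u assume "u \<longlonglongrightarrow> p0"
  then have "(\<lambda>n. iexp (g (u n) \<omega>)) \<longlonglongrightarrow> iexp (g p0 \<omega>)" for \<omega>
    by (intro tendsto_intros isCont_tendsto_compose[OF cont])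
  then show "(\<lambda>n. CLINT \<omega>|M. iexp (g (u n) \<omega>)) \<longlonglongrightarrow> (CLINT \<omega>|M. iexp (g p0 \<omega>))"
    by (intro integral_dominated_convergence[where w="\<lambda>_. 1"]) auto
qed

text \<open>No measurability of f is required, which spares proving the integrand of dcov2
  measurable.\<close>

lemma nn_integral_lborel_pos_if_isCont:
  fixes f :: "'e::euclidean_space \<Rightarrow> real"
  assumes "isCont f x" and "0 < f x"
  shows "0 < (\<integral>\<^sup>+y. ennreal (f y) \<partial>lborel)"
proof -
  obtain e where "e > 0" and e: "\<And>y. dist y x < e \<Longrightarrow> dist (f y) (f x) < f x / 2"
    using assms unfolding continuous_at_eps_delta by (metis half_gt_zero)
  obtain a b where "x \<in> box a b" and box: "box a b \<subseteq> ball x e"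
    using rational_boxes[OF \<open>e > 0\<close>] by blast
  have "0 < emeasure lborel (box a b)"
    using \<open>x \<in> box a b\<close> by (auto simp: emeasure_lborel_box_eq mem_box algebra_simps intro!: prod_pos)
  then have "0 < ennreal (f x / 2) * emeasure lborel (box a b)"
    using assms(2) by (simp add: ennreal_zero_less_mult_iff)
  also have "\<dots> = (\<integral>\<^sup>+y. ennreal (f x / 2) * indicator (box a b) y \<partial>lborel)"
    by (simp add: nn_integral_cmult_indicator)
  also have "\<dots> \<le> (\<integral>\<^sup>+y. ennreal (f y) \<partial>lborel)"
  proof (rule nn_integral_mono)
    fix y
    show "ennreal (f x / 2) * indicator (box a b) y \<le> ennreal (f y)"
    proof (cases "y \<in> box a b")
      case True
      then have "dist y x < e"
        using box by (auto simp: dist_commute)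
      then have "\<bar>f y - f x\<bar> < f x / 2"
        using e by (simp add: dist_real_def)
      then have "f x / 2 \<le> f y"
        by linarith
      then show ?thesis
        using True by (simp add: ennreal_leI)
    qed simp
  qed
  finally show ?thesis .
qed

lemma dcov2_eq_0_iff:
  assumes "prob_space M" and [measurable]: "U \<in> borel_measurable M" "V \<in> borel_measurable M"
  shows "dcov2 M U V = 0 \<longleftrightarrow> (\<forall>t s. charf2 M U V t s = charf M U t * charf M V s)"
proof -
  interpret prob_space M by fact
  define D where "D p = charf2 M U V (fst p) (snd p) - charf M U (fst p) * charf M V (snd p)" for p
  have dcov2_eq: "dcov2 M U V =
      (\<integral>\<^sup>+p. ennreal ((cmod (D p))\<^sup>2 / (pi * pi * (fst p)\<^sup>2 * (snd p)\<^sup>2)) \<partial>lborel)"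
    by (simp add: dcov2_def D_def lborel_prod dc_const_def)
  show ?thesis
  proof
    assume "dcov2 M U V = 0"
    show "\<forall>t s. charf2 M U V t s = charf M U t * charf M V s"
    proof (intro allI)
      fix t s :: real
      consider "t = 0" | "s = 0" | "t \<noteq> 0" "s \<noteq> 0" by blast
      then show "charf2 M U V t s = charf M U t * charf M V s"
      proof cases
        case 3
        have "isCont D (t, s)"
          unfolding D_def charf2_def charf_def
          by (intro continuous_intros isCont_integral_iexp[OF prob_space_axioms]) auto
        then have "isCont (\<lambda>p. (cmod (D p))\<^sup>2 / (pi * pi * (fst p)\<^sup>2 * (snd p)\<^sup>2)) (t, s)"
          using 3 by (intro continuous_intros) auto
        with \<open>dcov2 M U V = 0\<close> have "\<not> 0 < (cmod (D (t, s)))\<^sup>2 / (pi * pi * t\<^sup>2 * s\<^sup>2)"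
          using nn_integral_lborel_pos_if_isCont unfolding dcov2_eq by fastforce
        moreover have "0 < pi * pi * t\<^sup>2 * s\<^sup>2"
          using 3 by simp
        ultimately have "D (t, s) = 0"
          by (metis divide_pos_pos norm_eq_zero zero_less_power2)
        then show ?thesis by (simp add: D_def)
      qed (simp_all add: charf2_def charf_def prob_space)
    qed
  qed (simp add: dcov2_eq D_def)
qed

lemma ex_unit_scaling:
  fixes a :: "'e::euclidean_space"
  obtains u t where "norm u = 1" "a = t *\<^sub>R u"
proof (cases "a = 0")
  case True
  obtain b :: 'e where "b \<in> Basis"
    using nonempty_Basis by blast
  then show ?thesis
    using that[of b 0] True by simp
next
  case False
  then show ?thesis
    using that[of "sgn a" "norm a"] by (simp add: norm_sgn sgn_div_norm)
qed

theorem lemma4p1: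
  fixes M :: "'a measure" and X :: "'a \<Rightarrow> real ^ 'p" and Y :: "'a \<Rightarrow> real ^ 'q"
  assumes "prob_space M"
    and "X \<in> borel_measurable M" and "Y \<in> borel_measurable M"
  shows "indep_rv M X Y \<longleftrightarrow>
    (\<forall>(u::real ^ 'p) (v::real ^ 'q). norm u = 1 \<longrightarrow> norm v = 1 \<longrightarrow>
        dcov2 M (\<lambda>\<omega>. u \<bullet> X \<omega>) (\<lambda>\<omega>. v \<bullet> Y \<omega>) = 0)"
proof -
  note [measurable] = assms(2,3)
  have charf2_proj: "charf2 M (\<lambda>\<omega>. u \<bullet> X \<omega>) (\<lambda>\<omega>. v \<bullet> Y \<omega>) t s =
      (CLINT \<omega>|M. iexp ((t *\<^sub>R u) \<bullet> X \<omega> + (s *\<^sub>R v) \<bullet> Y \<omega>))" for u v t s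
    by (simp add: charf2_def)
  have charf_proj: "charf M (\<lambda>\<omega>. u \<bullet> Z \<omega>) t = (CLINT \<omega>|M. iexp ((t *\<^sub>R u) \<bullet> Z \<omega>))"
    for u t and Z :: "'a \<Rightarrow> 'e::euclidean_space"
    by (simp add: charf_def)
  have "indep_rv M X Y \<longleftrightarrow> (\<forall>a b. (CLINT \<omega>|M. iexp (a \<bullet> X \<omega> + b \<bullet> Y \<omega>)) =
      (CLINT \<omega>|M. iexp (a \<bullet> X \<omega>)) * (CLINT \<omega>|M. iexp (b \<bullet> Y \<omega>)))"
    by (rule indep_rv_iff_char_factorizes[OF assms])
  also have "\<dots> \<longleftrightarrow> (\<forall>(u::real ^ 'p) (v::real ^ 'q). norm u = 1 \<longrightarrow> norm v = 1 \<longrightarrow>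
      (\<forall>t s. charf2 M (\<lambda>\<omega>. u \<bullet> X \<omega>) (\<lambda>\<omega>. v \<bullet> Y \<omega>) t s =
        charf M (\<lambda>\<omega>. u \<bullet> X \<omega>) t * charf M (\<lambda>\<omega>. v \<bullet> Y \<omega>) s))"
  proof (intro iffI allI impI)
    fix u v :: "real ^ _" and t s :: real
    assume "\<forall>a b. (CLINT \<omega>|M. iexp (a \<bullet> X \<omega> + b \<bullet> Y \<omega>)) =
      (CLINT \<omega>|M. iexp (a \<bullet> X \<omega>)) * (CLINT \<omega>|M. iexp (b \<bullet> Y \<omega>))"
    then show "charf2 M (\<lambda>\<omega>. u \<bullet> X \<omega>) (\<lambda>\<omega>. v \<bullet> Y \<omega>) t s =
        charf M (\<lambda>\<omega>. u \<bullet> X \<omega>) t * charf M (\<lambda>\<omega>. v \<bullet> Y \<omega>) s"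
      unfolding charf2_proj charf_proj by blast
  next
    fix a :: "real ^ 'p" and b :: "real ^ 'q"
    assume unit: "\<forall>(u::real ^ 'p) (v::real ^ 'q). norm u = 1 \<longrightarrow> norm v = 1 \<longrightarrow>
      (\<forall>t s. charf2 M (\<lambda>\<omega>. u \<bullet> X \<omega>) (\<lambda>\<omega>. v \<bullet> Y \<omega>) t s =
        charf M (\<lambda>\<omega>. u \<bullet> X \<omega>) t * charf M (\<lambda>\<omega>. v \<bullet> Y \<omega>) s)"
    obtain u t where "norm u = 1" "a = t *\<^sub>R u" by (rule ex_unit_scaling)
    moreover obtain v s where "norm v = 1" "b = s *\<^sub>R v" by (rule ex_unit_scaling)
    ultimately show "(CLINT \<omega>|M. iexp (a \<bullet> X \<omega> + b \<bullet> Y \<omega>)) =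
        (CLINT \<omega>|M. iexp (a \<bullet> X \<omega>)) * (CLINT \<omega>|M. iexp (b \<bullet> Y \<omega>))"
      using unit unfolding charf2_proj charf_proj by simp
  qed
  also have "\<dots> \<longleftrightarrow> (\<forall>(u::real ^ 'p) (v::real ^ 'q). norm u = 1 \<longrightarrow> norm v = 1 \<longrightarrow>
      dcov2 M (\<lambda>\<omega>. u \<bullet> X \<omega>) (\<lambda>\<omega>. v \<bullet> Y \<omega>) = 0)"
    by (simp add: dcov2_eq_0_iff[OF assms(1)])
  finally show ?thesis .
qed

end
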